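(* The line-incompatibility graph of a trivially-perfect graph is a cograph.
   Context: All graphs are finite, simple and undirected. The line-incompatibility graph $\widehat{G}$ of $G$ has one node for each edge of $G$, and two nodes are adjacent iff the corresponding edges are of the form $\{u,v\},\{v,w\}$ with $\{u,w\}\notin E(G)$ (their endpoints induce a path on three vertices in $G$). A graph $G$ is trivially-perfect if for each induced subgraph $H$ of $G$ the number of maximal cliques of $H$ equals the maximum size of an independent set of $H$; equivalently (a known characterization), $G$ contains neither an induced path on four vertices ($P_4$) nor an induced cycle on four vertices ($C_4$). A cograph is a graph with no induced $P_4$. *)

theory Defs
  imports Main
begin

definition simple_graph :: "'a set \<Rightarrow> 'a set set \<Rightarrow> bool" where
  "simple_graph V E \<longleftrightarrow> finite V \<and> (\<forall>e\<in>E. e \<subseteq> V \<and> card e = 2)"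

definition is_clique :: "'a set set \<Rightarrow> 'a set \<Rightarrow> bool" where
  "is_clique E C \<longleftrightarrow> (\<forall>x\<in>C. \<forall>y\<in>C. x \<noteq> y \<longrightarrow> {x, y} \<in> E)"

definition is_indep :: "'a set set \<Rightarrow> 'a set \<Rightarrow> bool" where
  "is_indep E I \<longleftrightarrow> (\<forall>x\<in>I. \<forall>y\<in>I. x \<noteq> y \<longrightarrow> {x, y} \<notin> E)"

definition maximal_cliques :: "'a set set \<Rightarrow> 'a set \<Rightarrow> 'a set set" where
  "maximal_cliques E S = {C. C \<subseteq> S \<and> is_clique E C \<and>
      (\<forall>D. D \<subseteq> S \<and> is_clique E D \<and> C \<subseteq> D \<longrightarrow> D = C)}"

definition indep_number :: "'a set set \<Rightarrow> 'a set \<Rightarrow> nat" where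
  "indep_number E S = Max (card ` {I. I \<subseteq> S \<and> is_indep E I})"

definition trivially_perfect :: "'a set \<Rightarrow> 'a set set \<Rightarrow> bool" where
  "trivially_perfect V E \<longleftrightarrow>
     (\<forall>S. S \<subseteq> V \<and> S \<noteq> {} \<longrightarrow> card (maximal_cliques E S) = indep_number E S)"

definition induced_P4 :: "'a set \<Rightarrow> 'a set set \<Rightarrow> 'a \<Rightarrow> 'a \<Rightarrow> 'a \<Rightarrow> 'a \<Rightarrow> bool" where
  "induced_P4 V E a b c d \<longleftrightarrow> a \<in> V \<and> b \<in> V \<and> c \<in> V \<and> d \<in> V \<and>
     distinct [a, b, c, d] \<and> {a, b} \<in> E \<and> {b, c} \<in> E \<and> {c, d} \<in> E \<and>
     {a, c} \<notin> E \<and> {b, d} \<notin> E \<and> {a, d} \<notin> E"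

definition cograph :: "'a set \<Rightarrow> 'a set set \<Rightarrow> bool" where
  "cograph V E \<longleftrightarrow> (\<nexists>a b c d. induced_P4 V E a b c d)"

definition line_incomp_edges :: "'a set set \<Rightarrow> 'a set set set" where
  "line_incomp_edges E = {{e, f} | e f. e \<in> E \<and> f \<in> E \<and>
     (\<exists>u v w. u \<noteq> w \<and> e = {u, v} \<and> f = {v, w} \<and> {u, w} \<notin> E)}"

end

theory Submission
  imports Defs
begin

text \<open>
  In a trivially-perfect graph, a path \<open>a - b - c - d\<close> with \<open>ac\<close> and \<open>bd\<close> non-edges
  (an induced \<open>P\<^sub>4\<close> or \<open>C\<^sub>4\<close>) is impossible: its three path edges are maximal cliques of
  \<open>{a,b,c,d}\<close>, while every independent subset of it has at most two elements.
  Two edges adjacent in the line-incompatibility graph share exactly one vertex, their hub.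
  Along a path \<open>e\<^sub>1 e\<^sub>2 e\<^sub>3\<close> of that graph the hub cannot change, since a change of hub
  exhibits such a forbidden path in \<open>G\<close>. So an induced \<open>P\<^sub>4\<close> \<open>e\<^sub>i = {x, a\<^sub>i}\<close> in the
  line-incompatibility graph is a star, and the three non-adjacencies of the \<open>P\<^sub>4\<close> turn into
  edges \<open>a\<^sub>1a\<^sub>3\<close>, \<open>a\<^sub>2a\<^sub>4\<close>, \<open>a\<^sub>1a\<^sub>4\<close> of \<open>G\<close>, so that \<open>a\<^sub>2 - a\<^sub>4 - a\<^sub>1 - a\<^sub>3\<close> is an induced \<open>P\<^sub>4\<close>
  of \<open>G\<close>.
\<close>

lemma finite_maximal_cliques: "finite S \<Longrightarrow> finite (maximal_cliques E S)"
  by (rule finite_subset[of _ "Pow S"]) (auto simp: maximal_cliques_def)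

lemma indep_number_le:
  assumes "finite S" and "\<And>I. I \<subseteq> S \<Longrightarrow> is_indep E I \<Longrightarrow> card I \<le> k"
  shows "indep_number E S \<le> k"
proof -
  have "finite {I. I \<subseteq> S \<and> is_indep E I}"
    by (rule finite_subset[of _ "Pow S"]) (use assms(1) in auto)
  moreover have "{} \<in> {I. I \<subseteq> S \<and> is_indep E I}"
    by (simp add: is_indep_def)
  ultimately show ?thesis
    unfolding indep_number_def using assms(2) by (subst Max_le_iff) auto
qed

lemma card_indep_Int_edge:
  assumes "is_indep E I" and "{x, y} \<in> E"
  shows "card (I \<inter> {x, y}) \<le> 1"
proof -
  obtain z where "I \<inter> {x, y} \<subseteq> {z}"
    using assms unfolding is_indep_def by blast
  then have "card (I \<inter> {x, y}) \<le> card {z}"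
    by (rule card_mono[rotated]) simp
  then show ?thesis by simp
qed

lemma doubleton_in_maximal_cliques:
  assumes "{x, y} \<in> E" "x \<in> S" "y \<in> S"
    and "\<And>z. z \<in> S \<Longrightarrow> z \<noteq> x \<Longrightarrow> z \<noteq> y \<Longrightarrow> {x, z} \<notin> E \<or> {y, z} \<notin> E"
  shows "{x, y} \<in> maximal_cliques E S"
proof -
  have "is_clique E {x, y}"
    using assms(1) unfolding is_clique_def by (auto simp: insert_commute)
  moreover have "D = {x, y}" if "D \<subseteq> S" "is_clique E D" "{x, y} \<subseteq> D" for D
  proof -
    have "z = x \<or> z = y" if "z \<in> D" for z
    proof (rule ccontr)
      assume "\<not> (z = x \<or> z = y)"
      with \<open>z \<in> D\<close> \<open>is_clique E D\<close> \<open>{x, y} \<subseteq> D\<close> have "{x, z} \<in> E" "{y, z} \<in> E"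
        unfolding is_clique_def by auto
      with assms(4)[of z] \<open>z \<in> D\<close> \<open>D \<subseteq> S\<close> \<open>\<not> (z = x \<or> z = y)\<close> show False
        by blast
    qed
    then show ?thesis using \<open>{x, y} \<subseteq> D\<close> by blast
  qed
  ultimately show ?thesis
    unfolding maximal_cliques_def using assms(2,3) by blast
qed

lemma simple_graph_edge_neq:
  "simple_graph V E \<Longrightarrow> {x, y} \<in> E \<Longrightarrow> x \<noteq> y"
  unfolding simple_graph_def by fastforce

text \<open>The hypothesis leaves \<open>{a, d}\<close> unconstrained, so this excludes both \<open>P\<^sub>4\<close> and \<open>C\<^sub>4\<close>.\<close>

lemma trivially_perfect_no_P4_C4:
  assumes sg: "simple_graph V E" and tp: "trivially_perfect V E"
    and ab: "{a, b} \<in> E" and bc: "{b, c} \<in> E" and cd: "{c, d} \<in> E"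
    and nac: "{a, c} \<notin> E" and nbd: "{b, d} \<notin> E" and "a \<noteq> c" "b \<noteq> d"
  shows False
proof -
  define S where "S = {a, b, c, d}"
  have "a \<noteq> b" "b \<noteq> c" "c \<noteq> d"
    using ab bc cd simple_graph_edge_neq[OF sg] by blast+
  moreover have "a \<noteq> d"
    using nac cd by (auto simp: insert_commute)
  ultimately have dist: "distinct [a, b, c, d]"
    using \<open>a \<noteq> c\<close> \<open>b \<noteq> d\<close> by auto
  have "S \<subseteq> V"
    using sg ab cd unfolding simple_graph_def S_def by auto
  then have card_eq: "card (maximal_cliques E S) = indep_number E S"
    using tp unfolding trivially_perfect_def S_def by blast
  have "{{a, b}, {b, c}, {c, d}} \<subseteq> maximal_cliques E S"
    using ab bc cd nac nbd dist
    by (auto simp: S_def insert_commute intro!: doubleton_in_maximal_cliques)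
  moreover have "card {{a, b}, {b, c}, {c, d}} = 3"
    using dist by (auto simp: doubleton_eq_iff)
  ultimately have "3 \<le> card (maximal_cliques E S)"
    by (metis card_mono finite_maximal_cliques S_def finite.emptyI finite.insertI)
  moreover have "indep_number E S \<le> 2"
  proof (rule indep_number_le)
    fix I assume "I \<subseteq> S" "is_indep E I"
    then have "I = (I \<inter> {a, b}) \<union> (I \<inter> {c, d})"
      unfolding S_def by blast
    then have "card I \<le> card (I \<inter> {a, b}) + card (I \<inter> {c, d})"
      by (metis card_Un_le)
    then show "card I \<le> 2"
      using card_indep_Int_edge[OF \<open>is_indep E I\<close> ab] card_indep_Int_edge[OF \<open>is_indep E I\<close> cd]
      by linarith
  qed (simp add: S_def)
  ultimately show False
    using card_eq by linarith
qed

lemma line_incomp_edgesE: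
  assumes "{e, f} \<in> line_incomp_edges E"
  obtains x a c where "e = {x, a}" "f = {x, c}" "a \<noteq> c" "{a, c} \<notin> E" "e \<in> E" "f \<in> E"
proof -
  have "\<exists>e' f'. {e, f} = {e', f'} \<and> e' \<in> E \<and> f' \<in> E \<and>
      (\<exists>u v w. u \<noteq> w \<and> e' = {u, v} \<and> f' = {v, w} \<and> {u, w} \<notin> E)"
    using assms unfolding line_incomp_edges_def by (simp only: mem_Collect_eq)
  then obtain e' f' u v w where eq: "{e, f} = {e', f'}" and "e' \<in> E" "f' \<in> E" "u \<noteq> w"
    and e': "e' = {u, v}" and f': "f' = {v, w}" and "{u, w} \<notin> E"
    by (elim exE conjE) (rule that, assumption+)
  from eq consider "e = e'" "f = f'" | "e = f'" "f = e'"
    by (metis doubleton_eq_iff)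
  then show thesis
  proof cases
    case 1
    show thesis
    proof (rule that[of v u w])
      show "e = {v, u}"
        using 1 e' by (simp add: insert_commute)
    qed (use 1 f' \<open>e' \<in> E\<close> \<open>f' \<in> E\<close> \<open>u \<noteq> w\<close> \<open>{u, w} \<notin> E\<close> in simp_all)
  next
    case 2
    show thesis
    proof (rule that[of v w u])
      show "f = {v, u}" "{w, u} \<notin> E"
        using 2 e' \<open>{u, w} \<notin> E\<close> by (simp_all add: insert_commute)
    qed (use 2 f' \<open>e' \<in> E\<close> \<open>f' \<in> E\<close> \<open>u \<noteq> w\<close> in simp_all)
  qed
qed

lemma line_incomp_edgesI:
  assumes "{x, a} \<in> E" "{x, c} \<in> E" "a \<noteq> c" "{a, c} \<notin> E"
  shows "{{x, a}, {x, c}} \<in> line_incomp_edges E"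
proof -
  have "\<exists>u v w. u \<noteq> w \<and> {x, a} = {u, v} \<and> {x, c} = {v, w} \<and> {u, w} \<notin> E"
    using assms by (intro exI[of _ a] exI[of _ x] exI[of _ c]) (simp add: insert_commute)
  then have "\<exists>e f. {{x, a}, {x, c}} = {e, f} \<and> e \<in> E \<and> f \<in> E \<and>
      (\<exists>u v w. u \<noteq> w \<and> e = {u, v} \<and> f = {v, w} \<and> {u, w} \<notin> E)"
    using assms(1,2) by (intro exI[of _ "{x, a}"] exI[of _ "{x, c}"]) simp
  then show ?thesis
    unfolding line_incomp_edges_def by (simp only: mem_Collect_eq)
qed

lemma line_incomp_edges_non_adjacentD:
  assumes "{x, a} \<in> E" "{x, c} \<in> E" "a \<noteq> c"
    and "{{x, a}, {x, c}} \<notin> line_incomp_edges E"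
  shows "{a, c} \<in> E"
  using line_incomp_edgesI[OF assms(1-3)] assms(4) by blast

text \<open>A change of hub from \<open>x\<close> to \<open>b\<close> would make \<open>a - x - b - c\<close> a forbidden path.\<close>

lemma line_incomp_edges_keep_hub:
  assumes sg: "simple_graph V E" and tp: "trivially_perfect V E"
    and xa: "{x, a} \<in> E" and "a \<noteq> b" "{a, b} \<notin> E"
    and L: "{{x, b}, g} \<in> line_incomp_edges E"
  obtains c where "g = {x, c}" "b \<noteq> c" "{b, c} \<notin> E" "g \<in> E"
proof -
  obtain y p c where xb: "{x, b} = {y, p}" and g: "g = {y, c}" and "p \<noteq> c" "{p, c} \<notin> E"
    and "{x, b} \<in> E" "g \<in> E"
    using L by (rule line_incomp_edgesE) (rule that)
  have "x = y"
  proof (rule ccontr)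
    assume "x \<noteq> y"
    with xb have "y = b" "p = x" by (auto simp: doubleton_eq_iff)
    show False
    proof (rule trivially_perfect_no_P4_C4[OF sg tp])
      show "{a, x} \<in> E" "{x, b} \<in> E" "{b, c} \<in> E"
        using xa \<open>{x, b} \<in> E\<close> \<open>g \<in> E\<close> g \<open>y = b\<close> by (simp_all add: insert_commute)
      show "{a, b} \<notin> E" "{x, c} \<notin> E" "a \<noteq> b" "x \<noteq> c"
        using \<open>{a, b} \<notin> E\<close> \<open>{p, c} \<notin> E\<close> \<open>a \<noteq> b\<close> \<open>p \<noteq> c\<close> \<open>p = x\<close> by simp_all
    qed
  qed
  with xb have "p = b"
    by (metis doubleton_eq_iff)
  then show thesis
    using that[of c] g \<open>x = y\<close> \<open>p \<noteq> c\<close> \<open>{p, c} \<notin> E\<close> \<open>g \<in> E\<close> by simp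
qed

lemma induced_P4_line_incomp_edges_star:
  assumes sg: "simple_graph V E" and tp: "trivially_perfect V E"
    and P4: "induced_P4 E (line_incomp_edges E) e\<^sub>1 e\<^sub>2 e\<^sub>3 e\<^sub>4"
  obtains x a\<^sub>1 a\<^sub>2 a\<^sub>3 a\<^sub>4 where "e\<^sub>1 = {x, a\<^sub>1}" "e\<^sub>2 = {x, a\<^sub>2}" "e\<^sub>3 = {x, a\<^sub>3}" "e\<^sub>4 = {x, a\<^sub>4}"
    and "e\<^sub>1 \<in> E" "e\<^sub>2 \<in> E" "e\<^sub>3 \<in> E" "e\<^sub>4 \<in> E"
    and "a\<^sub>1 \<noteq> a\<^sub>2" "{a\<^sub>1, a\<^sub>2} \<notin> E" "a\<^sub>3 \<noteq> a\<^sub>4" "{a\<^sub>3, a\<^sub>4} \<notin> E"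
proof -
  from P4 have L12: "{e\<^sub>1, e\<^sub>2} \<in> line_incomp_edges E" and L23: "{e\<^sub>2, e\<^sub>3} \<in> line_incomp_edges E"
    and L34: "{e\<^sub>3, e\<^sub>4} \<in> line_incomp_edges E"
    unfolding induced_P4_def by blast+
  obtain x a\<^sub>1 a\<^sub>2 where e\<^sub>1: "e\<^sub>1 = {x, a\<^sub>1}" and e\<^sub>2: "e\<^sub>2 = {x, a\<^sub>2}"
    and "a\<^sub>1 \<noteq> a\<^sub>2" "{a\<^sub>1, a\<^sub>2} \<notin> E" "e\<^sub>1 \<in> E" "e\<^sub>2 \<in> E"
    using L12 by (rule line_incomp_edgesE)
  obtain a\<^sub>3 where e\<^sub>3: "e\<^sub>3 = {x, a\<^sub>3}" and "a\<^sub>2 \<noteq> a\<^sub>3" "{a\<^sub>2, a\<^sub>3} \<notin> E" "e\<^sub>3 \<in> E"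
    using line_incomp_edges_keep_hub[OF sg tp, of x a\<^sub>1 a\<^sub>2 e\<^sub>3] L23 e\<^sub>1 e\<^sub>2 \<open>e\<^sub>1 \<in> E\<close>
      \<open>a\<^sub>1 \<noteq> a\<^sub>2\<close> \<open>{a\<^sub>1, a\<^sub>2} \<notin> E\<close> by blast
  obtain a\<^sub>4 where e\<^sub>4: "e\<^sub>4 = {x, a\<^sub>4}" and "a\<^sub>3 \<noteq> a\<^sub>4" "{a\<^sub>3, a\<^sub>4} \<notin> E" "e\<^sub>4 \<in> E"
    using line_incomp_edges_keep_hub[OF sg tp, of x a\<^sub>2 a\<^sub>3 e\<^sub>4] L34 e\<^sub>2 e\<^sub>3 \<open>e\<^sub>2 \<in> E\<close>
      \<open>a\<^sub>2 \<noteq> a\<^sub>3\<close> \<open>{a\<^sub>2, a\<^sub>3} \<notin> E\<close> by blast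
  show thesis
    by (rule that[OF e\<^sub>1 e\<^sub>2 e\<^sub>3 e\<^sub>4]) fact+
qed

theorem theorem12:
  fixes V :: "'a set" and E :: "'a set set"
  assumes "simple_graph V E"
    and "trivially_perfect V E"
  shows "cograph E (line_incomp_edges E)"
  unfolding cograph_def
proof
  assume "\<exists>e\<^sub>1 e\<^sub>2 e\<^sub>3 e\<^sub>4. induced_P4 E (line_incomp_edges E) e\<^sub>1 e\<^sub>2 e\<^sub>3 e\<^sub>4"
  then obtain e\<^sub>1 e\<^sub>2 e\<^sub>3 e\<^sub>4 where P4: "induced_P4 E (line_incomp_edges E) e\<^sub>1 e\<^sub>2 e\<^sub>3 e\<^sub>4"
    by blast
  then obtain x a\<^sub>1 a\<^sub>2 a\<^sub>3 a\<^sub>4 where e: "e\<^sub>1 = {x, a\<^sub>1}" "e\<^sub>2 = {x, a\<^sub>2}" "e\<^sub>3 = {x, a\<^sub>3}" "e\<^sub>4 = {x, a\<^sub>4}"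
    and "e\<^sub>1 \<in> E" "e\<^sub>2 \<in> E" "e\<^sub>3 \<in> E" "e\<^sub>4 \<in> E"
    and "a\<^sub>1 \<noteq> a\<^sub>2" "{a\<^sub>1, a\<^sub>2} \<notin> E" "a\<^sub>3 \<noteq> a\<^sub>4" "{a\<^sub>3, a\<^sub>4} \<notin> E"
    by (rule induced_P4_line_incomp_edges_star[OF assms])
  have "distinct [a\<^sub>1, a\<^sub>2, a\<^sub>3, a\<^sub>4]" and N: "{e\<^sub>1, e\<^sub>3} \<notin> line_incomp_edges E"
      "{e\<^sub>2, e\<^sub>4} \<notin> line_incomp_edges E" "{e\<^sub>1, e\<^sub>4} \<notin> line_incomp_edges E"
    using P4 unfolding induced_P4_def e by auto
  then have "{a\<^sub>1, a\<^sub>3} \<in> E" "{a\<^sub>2, a\<^sub>4} \<in> E" "{a\<^sub>1, a\<^sub>4} \<in> E"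
    using \<open>e\<^sub>1 \<in> E\<close> \<open>e\<^sub>2 \<in> E\<close> \<open>e\<^sub>3 \<in> E\<close> \<open>e\<^sub>4 \<in> E\<close> unfolding e
    by (auto intro: line_incomp_edges_non_adjacentD)
  then show False
    using trivially_perfect_no_P4_C4[OF assms, of a\<^sub>2 a\<^sub>4 a\<^sub>1 a\<^sub>3] \<open>{a\<^sub>1, a\<^sub>2} \<notin> E\<close> \<open>{a\<^sub>3, a\<^sub>4} \<notin> E\<close>
      \<open>a\<^sub>1 \<noteq> a\<^sub>2\<close> \<open>a\<^sub>3 \<noteq> a\<^sub>4\<close> by (simp add: insert_commute)
qed

end
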